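(* Let $F$ be a field with $\mathrm{char}\,F\ne2$ and let $B$ be a $3$-dimensional non-commutative involutive $F$-algebra. Then there is a basis $u,v$ of $\mathrm{Im}\,B$ such that $u\times v=u$ and either $(u,u)=0$ or $(u,v)=0$.
   Context: Algebras are unital, multiplication bilinear and not necessarily associative. $B$ is involutive if there is an anti-automorphism $a\mapsto\bar a$ of order dividing $2$ with $a+\bar a\in F1$ and $a\bar a\in F1$ for all $a$; such algebras are quadratic ($1,a,a^2$ linearly dependent for all $a$). For a quadratic algebra with $\mathrm{char}\,F\ne2$, $\mathrm{Im}\,B=\{u\in B\setminus F1:u^2\in F1\}\cup\{0\}$, $B=F1\oplus\mathrm{Im}\,B$, and for $u,v\in\mathrm{Im}\,B$ one writes $uv=(u,v)1+u\times v$ with $(u,v)\in F$ and $u\times v\in\mathrm{Im}\,B$; this defines a bilinear form $(\cdot,\cdot)$ and an anti-commutative product $\times$ on $\mathrm{Im}\,B$. *)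

theory Defs
  imports Complex_Main
begin

text \<open>An algebra over a field 'a is modelled on the whole type 'b, with scalar
multiplication scale, multiplication mult and unit one.\<close>

definition scalars :: "('a::field \<Rightarrow> 'b::ab_group_add \<Rightarrow> 'b) \<Rightarrow> 'b \<Rightarrow> 'b set" where
  "scalars scale one = range (\<lambda>c. scale c one)"

definition unital_algebra ::
  "('a::field \<Rightarrow> 'b::ab_group_add \<Rightarrow> 'b) \<Rightarrow> ('b \<Rightarrow> 'b \<Rightarrow> 'b) \<Rightarrow> 'b \<Rightarrow> bool" where
  "unital_algebra scale mult one \<longleftrightarrow>
     vector_space scale \<and>
     (\<forall>x. Vector_Spaces.linear scale scale (\<lambda>y. mult x y)) \<and>
     (\<forall>y. Vector_Spaces.linear scale scale (\<lambda>x. mult x y)) \<and>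
     (\<forall>x. mult one x = x \<and> mult x one = x)"

definition involutive_algebra ::
  "('a::field \<Rightarrow> 'b::ab_group_add \<Rightarrow> 'b) \<Rightarrow> ('b \<Rightarrow> 'b \<Rightarrow> 'b) \<Rightarrow> 'b \<Rightarrow> ('b \<Rightarrow> 'b) \<Rightarrow> bool" where
  "involutive_algebra scale mult one cj \<longleftrightarrow>
     unital_algebra scale mult one \<and>
     Vector_Spaces.linear scale scale cj \<and> bij cj \<and>
     (\<forall>a b. cj (mult a b) = mult (cj b) (cj a)) \<and>
     (\<forall>a. cj (cj a) = a) \<and>
     (\<forall>a. a + cj a \<in> scalars scale one \<and> mult a (cj a) \<in> scalars scale one)"

definition ImB :: "('a::field \<Rightarrow> 'b::ab_group_add \<Rightarrow> 'b) \<Rightarrow> ('b \<Rightarrow> 'b \<Rightarrow> 'b) \<Rightarrow> 'b \<Rightarrow> 'b set" where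
  "ImB scale mult one =
     {u. u \<notin> scalars scale one \<and> mult u u \<in> scalars scale one} \<union> {0}"

text \<open>For u, v in Im B: u v = (u,v) 1 + u \<times> v with (u,v) in F and u \<times> v in Im B.\<close>
definition bform :: "('a::field \<Rightarrow> 'b::ab_group_add \<Rightarrow> 'b) \<Rightarrow> ('b \<Rightarrow> 'b \<Rightarrow> 'b) \<Rightarrow> 'b \<Rightarrow> 'b \<Rightarrow> 'b \<Rightarrow> 'a" where
  "bform scale mult one u v =
     (THE c. \<exists>w\<in>ImB scale mult one. mult u v = scale c one + w)"

definition cross :: "('a::field \<Rightarrow> 'b::ab_group_add \<Rightarrow> 'b) \<Rightarrow> ('b \<Rightarrow> 'b \<Rightarrow> 'b) \<Rightarrow> 'b \<Rightarrow> 'b \<Rightarrow> 'b \<Rightarrow> 'b" where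
  "cross scale mult one u v =
     (THE w. w \<in> ImB scale mult one \<and> (\<exists>c. mult u v = scale c one + w))"

end

theory Submission
  imports Defs
begin

text \<open>Since \<open>char F \<noteq> 2\<close>, \<open>Im B\<close> is the \<open>-1\<close>-eigenspace of the involution and \<open>B = F1 \<oplus> Im B\<close>;
hence \<open>(\<cdot>,\<cdot>)\<close> and \<open>\<times>\<close> are bilinear, symmetric resp. alternating on \<open>Im B\<close>. Non-commutativity gives
\<open>e, f \<in> Im B\<close> with \<open>w = e \<times> f \<noteq> 0\<close>, and as \<open>dim Im B = 2\<close> we may write \<open>w = a e + b f\<close>. Then
\<open>w \<times> f = a w\<close> and \<open>w \<times> e = -b w\<close>, so a suitable multiple \<open>v\<^sub>0\<close> of \<open>f\<close> or \<open>e\<close> satisfies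
\<open>w \<times> v\<^sub>0 = w\<close>. Finally, if \<open>(w,w) \<noteq> 0\<close>, replacing \<open>v\<^sub>0\<close> by \<open>v\<^sub>0 + \<mu> w\<close> keeps \<open>w \<times> v = w\<close> and
makes \<open>(w,v) = 0\<close>.\<close>

lemma (in vector_space) independent_card_le_dim_UNIV:
  assumes "0 < dim (UNIV :: 'b set)" and "independent S"
  shows "finite S" and "card S \<le> dim (UNIV :: 'b set)"
proof -
  obtain B where "independent B" "UNIV \<subseteq> span B" "card B = dim (UNIV :: 'b set)"
    using basis_exists[of UNIV] by blast
  moreover have "finite B"
    using assms(1) \<open>card B = _\<close> card.infinite by force
  ultimately show "finite S" "card S \<le> dim (UNIV :: 'b set)"
    using independent_span_bound[of B S] assms(2) by auto
qed

lemma (in vector_space) nontrivial_if_dim_UNIV_pos: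
  assumes "0 < dim (UNIV :: 'b set)"
  shows "(UNIV :: 'b set) \<noteq> {0}"
proof
  assume "(UNIV :: 'b set) = {0}"
  then have "span {} = span (UNIV :: 'b set)"
    by (simp add: span_empty)
  then show False
    using assms dim_eq_card[of "{}" UNIV] independent_empty by simp
qed

locale involutive_alg = vector_space scale
  for scale :: "'a::field \<Rightarrow> 'b::ab_group_add \<Rightarrow> 'b" (infixr \<open>*s\<close> 75) +
  fixes mult :: "'b \<Rightarrow> 'b \<Rightarrow> 'b" and one :: 'b and cj :: "'b \<Rightarrow> 'b"
  assumes involutive: "involutive_algebra scale mult one cj"
    and two_neq_zero: "(2::'a) \<noteq> 0"
    and nontrivial: "(UNIV :: 'b set) \<noteq> {0}"
begin

abbreviation "Im\<^sub>B \<equiv> ImB scale mult one"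
abbreviation "bf \<equiv> bform scale mult one"
abbreviation "cr \<equiv> cross scale mult one"

lemma mult_add_right: "mult x (y + z) = mult x y + mult x z"
  and mult_scale_right: "mult x (c *s y) = c *s mult x y"
  and mult_add_left: "mult (y + z) x = mult y x + mult z x"
  and mult_scale_left: "mult (c *s y) x = c *s mult y x"
  and mult_one_left: "mult one x = x"
  and mult_one_right: "mult x one = x"
  and cj_add: "cj (x + y) = cj x + cj y"
  and cj_scale: "cj (c *s x) = c *s cj x"
  and cj_mult: "cj (mult x y) = mult (cj y) (cj x)"
  and cj_cj: "cj (cj x) = x"
  and add_cj_scalar: "\<exists>t. x + cj x = t *s one"
  and mult_cj_scalar: "\<exists>n. mult x (cj x) = n *s one"
  using involutive unfolding involutive_algebra_def unital_algebra_def Vector_Spaces.linear_iff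
  by (auto simp: scalars_def)

lemma cj_zero: "cj 0 = 0"
  and mult_minus_right: "mult x (- y) = - mult x y"
  and mult_minus_left: "mult (- y) x = - mult y x"
  and cj_minus: "cj (- x) = - cj x"
  and cj_diff: "cj (x - y) = cj x - cj y"
proof -
  interpret right: additive "mult x" by standard (rule mult_add_right)
  interpret left: additive "\<lambda>y. mult y x" by standard (rule mult_add_left)
  interpret conj: additive cj by standard (rule cj_add)
  show "cj 0 = 0" by (rule conj.zero)
  show "mult x (- y) = - mult x y" by (rule right.minus)
  show "mult (- y) x = - mult y x" by (rule left.minus)
  show "cj (- x) = - cj x" by (rule conj.minus)
  show "cj (x - y) = cj x - cj y" by (rule conj.diff)
qed

lemma one_neq_zero: "one \<noteq> 0"
  using nontrivial mult_one_left mult_scale_left[of 0] by (metis UNIV_eq_I scale_zero_left singletonI)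

lemma cj_one: "cj one = one"
  by (metis cj_cj cj_mult mult_one_left mult_one_right)

lemma cj_scalar: "cj (c *s one) = c *s one"
  by (simp add: cj_scale cj_one)

lemma eq_zero_if_add_self_eq_zero: "(x::'b) + x = 0 \<Longrightarrow> x = 0"
  using two_neq_zero by (metis one_add_one scale_left_distrib scale_one scale_eq_0_iff)

lemma mem_Im_iff: "u \<in> Im\<^sub>B \<longleftrightarrow> cj u = - u"
proof
  assume u: "u \<in> Im\<^sub>B"
  show "cj u = - u"
  proof (cases "u = 0")
    case False
    with u have nonscalar: "\<And>c. u \<noteq> c *s one" and "\<exists>d. mult u u = d *s one"
      unfolding ImB_def scalars_def by auto
    then obtain d where d: "mult u u = d *s one" by blast
    obtain t where t: "u + cj u = t *s one" using add_cj_scalar by blast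
    obtain n where n: "mult u (cj u) = n *s one" using mult_cj_scalar by blast
    \<comment> \<open>\<open>u (u + \<bar>u\<bar>) = u\<^sup>2 + u \<bar>u\<bar>\<close> is a scalar, so \<open>t u\<close> is one, which forces \<open>t = 0\<close>.\<close>
    have "mult u (cj u) = mult u (t *s one - u)"
      using t by (metis add_diff_cancel_left')
    also have "\<dots> = t *s u - d *s one"
      by (simp only: diff_conv_add_uminus mult_add_right mult_minus_right mult_scale_right
          mult_one_right d)
    finally have "t *s u = (n + d) *s one"
      using n by (simp add: scale_left_distrib algebra_simps)
    then have "t = 0"
      using nonscalar[of "inverse t * (n + d)"] by (metis left_inverse scale_one scale_scale)
    then show ?thesis
      using t by (simp add: eq_neg_iff_add_eq_0 add.commute)
  qed (simp add: cj_zero)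
next
  assume cj_u: "cj u = - u"
  have "u = 0" if "u = c *s one" for c
    using cj_u that cj_scalar eq_zero_if_add_self_eq_zero by (metis add.right_inverse)
  moreover obtain n where "mult u (cj u) = n *s one" using mult_cj_scalar by blast
  then have "- mult u u = n *s one"
    using cj_u by (simp add: mult_minus_right)
  then have "mult u u = (- n) *s one"
    by (metis minus_minus scale_minus_left)
  then have "mult u u \<in> scalars scale one"
    unfolding scalars_def by (rule range_eqI)
  ultimately show "u \<in> Im\<^sub>B"
    unfolding ImB_def scalars_def by auto
qed

lemma subspace_Im: "subspace Im\<^sub>B"
  unfolding subspace_def by (auto simp: mem_Im_iff cj_zero cj_add cj_scale)

lemma scalar_in_Im_iff: "c *s one \<in> Im\<^sub>B \<longleftrightarrow> c = 0"
  using eq_zero_if_add_self_eq_zero[of "c *s one"] one_neq_zero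
  by (auto simp: mem_Im_iff cj_scalar eq_neg_iff_add_eq_0)

lemma scalar_Im_decomposition: "\<exists>c w. w \<in> Im\<^sub>B \<and> x = c *s one + w"
proof -
  obtain t where t: "x + cj x = t *s one" using add_cj_scalar by blast
  define c where "c = t / 2"
  have "c + c = t"
    using two_neq_zero unfolding c_def by (simp flip: add_divide_distrib mult_2)
  then have "cj x = c *s one + c *s one - x"
    using t by (metis add_diff_cancel_left' scale_left_distrib)
  then have "cj (x - c *s one) = - (x - c *s one)"
    by (simp add: cj_diff cj_scalar)
  then show ?thesis
    by (intro exI[of _ c] exI[of _ "x - c *s one"]) (simp add: mem_Im_iff)
qed

lemma scalar_Im_decomposition_unique:
  assumes "w \<in> Im\<^sub>B" "w' \<in> Im\<^sub>B" and "c *s one + w = d *s one + w'"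
  shows "c = d" and "w = w'"
proof -
  have "(c - d) *s one = w' - w"
    using assms(3) by (simp add: scale_left_diff_distrib algebra_simps)
  moreover have "w' - w \<in> Im\<^sub>B"
    using assms(1,2) subspace_Im by (simp add: subspace_diff)
  ultimately have "(c - d) *s one \<in> Im\<^sub>B"
    by simp
  then show "c = d"
    using scalar_in_Im_iff by simp
  then show "w = w'"
    using assms(3) by simp
qed

lemma bform_cross_eqI:
  assumes "w \<in> Im\<^sub>B" and "mult x y = c *s one + w"
  shows "bf x y = c" and "cr x y = w"
proof -
  have unique: "c' = c \<and> w' = w" if "w' \<in> Im\<^sub>B" "mult x y = c' *s one + w'" for c' w'
    using scalar_Im_decomposition_unique[OF that(1) assms(1), of c' c] that(2) assms(2) by simp
  show "bf x y = c"
    unfolding bform_def using assms unique by blast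
  show "cr x y = w"
    unfolding cross_def using assms unique by blast
qed

lemma cross_in_Im: "cr x y \<in> Im\<^sub>B"
  and mult_eq_bform_cross: "mult x y = bf x y *s one + cr x y"
  using scalar_Im_decomposition[of "mult x y"] bform_cross_eqI by metis+

lemma cross_add_right: "cr x (y + z) = cr x y + cr x z"
  and bform_add_right: "bf x (y + z) = bf x y + bf x z"
proof -
  have "mult x (y + z) = (bf x y + bf x z) *s one + (cr x y + cr x z)"
    using mult_eq_bform_cross[of x y] mult_eq_bform_cross[of x z]
    by (simp add: mult_add_right scale_left_distrib algebra_simps)
  moreover have "cr x y + cr x z \<in> Im\<^sub>B"
    using subspace_Im cross_in_Im by (simp add: subspace_add)
  ultimately show "cr x (y + z) = cr x y + cr x z" "bf x (y + z) = bf x y + bf x z"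
    using bform_cross_eqI by blast+
qed

lemma cross_scale_right: "cr x (a *s y) = a *s cr x y"
  and bform_scale_right: "bf x (a *s y) = a * bf x y"
proof -
  have "mult x (a *s y) = (a * bf x y) *s one + a *s cr x y"
    using mult_eq_bform_cross[of x y] by (simp add: mult_scale_right scale_right_distrib)
  moreover have "a *s cr x y \<in> Im\<^sub>B"
    using subspace_Im cross_in_Im by (simp add: subspace_scale)
  ultimately show "cr x (a *s y) = a *s cr x y" "bf x (a *s y) = a * bf x y"
    using bform_cross_eqI by blast+
qed

lemma cross_add_left: "cr (y + z) x = cr y x + cr z x"
proof -
  have "mult (y + z) x = (bf y x + bf z x) *s one + (cr y x + cr z x)"
    using mult_eq_bform_cross[of y x] mult_eq_bform_cross[of z x]
    by (simp add: mult_add_left scale_left_distrib algebra_simps)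
  moreover have "cr y x + cr z x \<in> Im\<^sub>B"
    using subspace_Im cross_in_Im by (simp add: subspace_add)
  ultimately show ?thesis
    using bform_cross_eqI by blast
qed

lemma cross_scale_left: "cr (a *s y) x = a *s cr y x"
proof -
  have "mult (a *s y) x = (a * bf y x) *s one + a *s cr y x"
    using mult_eq_bform_cross[of y x] by (simp add: mult_scale_left scale_right_distrib)
  moreover have "a *s cr y x \<in> Im\<^sub>B"
    using subspace_Im cross_in_Im by (simp add: subspace_scale)
  ultimately show ?thesis
    using bform_cross_eqI by blast
qed

lemma cross_antisym: "u \<in> Im\<^sub>B \<Longrightarrow> v \<in> Im\<^sub>B \<Longrightarrow> cr v u = - cr u v"
  and bform_sym: "u \<in> Im\<^sub>B \<Longrightarrow> v \<in> Im\<^sub>B \<Longrightarrow> bf v u = bf u v"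
proof -
  assume "u \<in> Im\<^sub>B" "v \<in> Im\<^sub>B"
  then have "mult v u = cj (mult u v)"
    by (simp add: mem_Im_iff cj_mult mult_minus_left mult_minus_right)
  also have "\<dots> = bf u v *s one + - cr u v"
    using cross_in_Im[of u v] by (subst mult_eq_bform_cross) (simp add: cj_add cj_scalar mem_Im_iff)
  finally have "mult v u = bf u v *s one + - cr u v" .
  moreover have "- cr u v \<in> Im\<^sub>B"
    using cross_in_Im by (simp add: mem_Im_iff cj_minus)
  ultimately show "cr v u = - cr u v" "bf v u = bf u v"
    using bform_cross_eqI by blast+
qed

lemma cross_self: "u \<in> Im\<^sub>B \<Longrightarrow> cr u u = 0"
  using cross_antisym[of u u] eq_zero_if_add_self_eq_zero by (metis add.right_inverse)

lemma cross_zero_right: "cr x 0 = 0"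
  using cross_scale_right[of x 0 0] by simp

lemma exists_cross_nonzero:
  assumes "mult a b \<noteq> mult b a"
  shows "\<exists>e\<in>Im\<^sub>B. \<exists>f\<in>Im\<^sub>B. cr e f \<noteq> 0"
proof (rule ccontr)
  assume "\<not> ?thesis"
  then have commute: "mult e f = mult f e" if "e \<in> Im\<^sub>B" "f \<in> Im\<^sub>B" for e f
    using mult_eq_bform_cross[of e f] mult_eq_bform_cross[of f e] bform_sym[OF that] that by simp
  obtain c e where e: "e \<in> Im\<^sub>B" "a = c *s one + e" using scalar_Im_decomposition by blast
  obtain d f where f: "f \<in> Im\<^sub>B" "b = d *s one + f" using scalar_Im_decomposition by blast
  have "mult a b = (c * d) *s one + c *s f + d *s e + mult e f"
    and "mult b a = (c * d) *s one + c *s f + d *s e + mult f e"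
    using e f by (simp_all add: mult_add_left mult_add_right mult_scale_left mult_scale_right
        mult_one_left mult_one_right algebra_simps mult.commute)
  then show False
    using assms commute[OF e(1) f(1)] by simp
qed

lemma independent_pair_if_cross_nonzero:
  assumes "v \<in> Im\<^sub>B" and "cr u v \<noteq> 0"
  shows "u \<noteq> v" and "\<not> dependent {u, v}"
proof -
  show "u \<noteq> v"
    using assms cross_self by blast
  have "v \<noteq> 0"
    using assms(2) cross_zero_right by blast
  moreover have "u \<notin> span {v}"
    using assms cross_scale_left cross_self by (auto simp: span_singleton)
  ultimately show "\<not> dependent {u, v}"
    by (simp add: independent_insert span_base)
qed

lemma card_independent_Im_less_dim:
  assumes "0 < dim (UNIV :: 'b set)" and "S \<subseteq> Im\<^sub>B" and "independent S"
  shows "card S < dim (UNIV :: 'b set)"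
proof -
  have "one \<notin> span S"
    using span_minimal[OF assms(2) subspace_Im] scalar_in_Im_iff[of 1] one_neq_zero by auto
  then have "independent (insert one S)" and "one \<notin> S"
    using assms(3) span_base[of one S] by (auto simp: independent_insert)
  then have "finite S" and "card (insert one S) \<le> dim (UNIV :: 'b set)"
    using independent_card_le_dim_UNIV[OF assms(1) \<open>independent (insert one S)\<close>] by simp_all
  then show ?thesis
    using \<open>one \<notin> S\<close> by simp
qed

lemma Im_eq_span_pair:
  assumes dim3: "dim (UNIV :: 'b set) = 3"
    and "u \<in> Im\<^sub>B" "v \<in> Im\<^sub>B" and "cr u v \<noteq> 0"
  shows "span {u, v} = Im\<^sub>B"
proof
  show "span {u, v} \<subseteq> Im\<^sub>B"
    using assms(2,3) by (simp add: span_minimal subspace_Im)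
  show "Im\<^sub>B \<subseteq> span {u, v}"
  proof
    fix x assume "x \<in> Im\<^sub>B"
    show "x \<in> span {u, v}"
    proof (rule ccontr)
      assume "x \<notin> span {u, v}"
      moreover have "u \<noteq> v" and "independent {u, v}"
        using independent_pair_if_cross_nonzero[OF assms(3,4)] by auto
      moreover have "x \<notin> {u, v}"
        using \<open>x \<notin> span {u, v}\<close> span_base by blast
      ultimately have "independent {x, u, v}" and "card {x, u, v} = 3"
        by (simp_all add: independent_insert)
      then show False
        using card_independent_Im_less_dim[of "{x, u, v}"] assms \<open>x \<in> Im\<^sub>B\<close> by simp
    qed
  qed
qed

lemma exists_cross_eq_self:
  assumes "dim (UNIV :: 'b set) = 3" and "mult a b \<noteq> mult b a"
  shows "\<exists>w\<in>Im\<^sub>B. \<exists>v\<in>Im\<^sub>B. w \<noteq> 0 \<and> cr w v = w"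
proof -
  obtain e f where e: "e \<in> Im\<^sub>B" and f: "f \<in> Im\<^sub>B" and "cr e f \<noteq> 0"
    using exists_cross_nonzero[OF assms(2)] by blast
  define w where "w = cr e f"
  have "w \<noteq> 0" and "w \<in> Im\<^sub>B"
    using \<open>cr e f \<noteq> 0\<close> cross_in_Im by (simp_all add: w_def)
  then have "w \<in> span {e, f}"
    using Im_eq_span_pair[OF assms(1) e f \<open>cr e f \<noteq> 0\<close>] by simp
  then obtain a b where "w - a *s e = b *s f"
    by (auto simp: span_insert[of e] span_singleton)
  then have ab: "w = a *s e + b *s f"
    by (metis diff_add_cancel add.commute)
  have "cr w e = a *s cr e e + b *s cr f e"
    using ab by (simp add: cross_add_left cross_scale_left)
  also have "\<dots> = (- b) *s w"
    using cross_self[OF e] cross_antisym[OF e f] by (simp add: w_def)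
  finally have we: "cr w ((- inverse b) *s e) = w" if "b \<noteq> 0"
    using that by (simp only: cross_scale_right) simp
  have "cr w f = a *s cr e f + b *s cr f f"
    using ab by (simp add: cross_add_left cross_scale_left)
  also have "\<dots> = a *s w"
    using cross_self[OF f] by (simp add: w_def)
  finally have wf: "cr w (inverse a *s f) = w" if "a \<noteq> 0"
    using that by (simp add: cross_scale_right)
  have "a \<noteq> 0 \<or> b \<noteq> 0"
    using ab \<open>w \<noteq> 0\<close> by auto
  then show ?thesis
    using we wf \<open>w \<noteq> 0\<close> \<open>w \<in> Im\<^sub>B\<close> subspace_scale[OF subspace_Im] e f by metis
qed

lemma exists_cross_eq_self_orthogonal:
  assumes "w \<in> Im\<^sub>B" and "v\<^sub>0 \<in> Im\<^sub>B" and "cr w v\<^sub>0 = w"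
  shows "\<exists>v\<in>Im\<^sub>B. cr w v = w \<and> (bf w w = 0 \<or> bf w v = 0)"
proof (cases "bf w w = 0")
  case False
  define \<mu> where "\<mu> = - bf w v\<^sub>0 / bf w w"
  define v where "v = v\<^sub>0 + \<mu> *s w"
  have "v \<in> Im\<^sub>B"
    unfolding v_def by (intro subspace_add subspace_scale subspace_Im assms(1,2))
  moreover have "cr w v = w"
    unfolding v_def using assms by (simp add: cross_add_right cross_scale_right cross_self)
  moreover have "bf w v = bf w v\<^sub>0 + \<mu> * bf w w"
    unfolding v_def by (simp add: bform_add_right bform_scale_right)
  then have "bf w v = 0"
    using False by (simp add: \<mu>_def)
  ultimately show ?thesis by blast
qed (use assms in blast)

end

theorem lemma4p7:
  fixes scale :: "'a::field \<Rightarrow> 'b::ab_group_add \<Rightarrow> 'b"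
    and mult :: "'b \<Rightarrow> 'b \<Rightarrow> 'b" and one :: 'b and cj :: "'b \<Rightarrow> 'b"
  assumes char: "(2::'a) \<noteq> 0"
    and inv: "involutive_algebra scale mult one cj"
    and dim3: "vector_space.dim scale (UNIV :: 'b set) = 3"
    and noncomm: "\<exists>a b. mult a b \<noteq> mult b a"
  shows "\<exists>u v. u \<in> ImB scale mult one \<and> v \<in> ImB scale mult one \<and>
           u \<noteq> v \<and> \<not> module.dependent scale {u, v} \<and>
           module.span scale {u, v} = ImB scale mult one \<and>
           cross scale mult one u v = u \<and>
           (bform scale mult one u u = 0 \<or> bform scale mult one u v = 0)"
proof -
  have vs: "vector_space scale"
    using inv unfolding involutive_algebra_def unital_algebra_def by blast
  interpret involutive_alg scale mult one cj
  proof (rule involutive_alg.intro[OF vs], unfold_locales)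
    show "(UNIV :: 'b set) \<noteq> {0}"
      using vector_space.nontrivial_if_dim_UNIV_pos[OF vs] dim3 by simp
  qed (fact inv char)+
  obtain u v where u: "u \<in> Im\<^sub>B" and v: "v \<in> Im\<^sub>B" and "u \<noteq> 0"
    and uv: "cr u v = u" and orth: "bf u u = 0 \<or> bf u v = 0"
    using exists_cross_eq_self[OF dim3] exists_cross_eq_self_orthogonal noncomm by metis
  then have "cr u v \<noteq> 0"
    by simp
  then show ?thesis
    using u v uv orth independent_pair_if_cross_nonzero[OF v] Im_eq_span_pair[OF dim3 u v] by blast
qed

end
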